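(* Let $n,k\ge0$ be integers, $R\subseteq[0,k]$ and $R^c=[0,k]\setminus R$. Define $$\binom{n}{k,R}=\#\bigl\{\{s_1<s_2<\dots<s_k\}\subseteq[n] : s_{i+1}=s_i+1\text{ for all } i\in R\bigr\},$$ with the conventions $s_0=0$ and $s_{k+1}=n+1$. Then $$\binom{n}{k,R}=\sum_{\ell\ge0}(-1)^{\ell-k}\binom{\ell}{k,R^c}\binom{n}{\ell},$$ where $\binom{n}{\ell}$ is the ordinary binomial coefficient.
   Context: $[n]=\{1,\dots,n\}$ and $[0,k]=\{0,1,\dots,k\}$. *)

theory Defs
  imports Complex_Main
begin

definition spt :: "nat \<Rightarrow> nat \<Rightarrow> nat set \<Rightarrow> nat \<Rightarrow> nat" where
  "spt n k S i = (if i = 0 then 0 else if i = k + 1 then n + 1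
                  else sorted_list_of_set S ! (i - 1))"

definition binomR :: "nat \<Rightarrow> nat \<Rightarrow> nat set \<Rightarrow> nat" where
  "binomR n k R = card {S. S \<subseteq> {1..n} \<and> card S = k \<and>
      (\<forall>i\<in>R. spt n k S (Suc i) = spt n k S i + 1)}"

end

theory Submission
  imports Defs "HOL-Library.Multiset" "HOL-Computational_Algebra.Formal_Power_Series"
begin

(*
  A k-subset s_1 < ... < s_k of [n] is determined by its gaps g_i = s_{i+1} - s_i - 1
  (0 \<le> i \<le> k, with s_0 = 0 and s_{k+1} = n + 1), which form a weak composition of n - k
  into k + 1 parts; the condition s_{i+1} = s_i + 1 says exactly that g_i = 0.  Hence the
  subsets counted by binomR n k R correspond to weak compositions of n - k supported on R^c,
  i.e. to multisets of size n - k over R^c, and binomR n k R = ((|R^c| + n - k - 1) choose (n - k)).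
  Since |R| + |R^c| = k + 1, substituting l = k + j turns the claimed identity into
  sum_j (-|R| gchoose j) (n choose (n - k - j)) = ((n - |R|) gchoose (n - k)),
  which is the Chu--Vandermonde identity.
*)

definition weak_compositions :: "'a set \<Rightarrow> nat \<Rightarrow> ('a \<Rightarrow> nat) set" where
  "weak_compositions A N = {g. (\<forall>i. i \<notin> A \<longrightarrow> g i = 0) \<and> sum g A = N}"

lemma finite_support_weak_compositions:
  assumes "finite A" "g \<in> weak_compositions A N"
  shows "finite {x. 0 < g x}"
proof -
  have "{x. 0 < g x} \<subseteq> A"
    using assms(2) by (auto simp: weak_compositions_def)
  then show ?thesis
    using assms(1) by (rule finite_subset)
qed

lemma size_eq_sum_count:
  assumes "finite A" "set_mset M \<subseteq> A"
  shows "size M = sum (count M) A"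
proof -
  have "sum (count M) A = sum (count M) (set_mset M)"
    using assms by (intro sum.mono_neutral_right) (auto simp: not_in_iff)
  then show ?thesis
    by (metis size_multiset_overloaded_eq)
qed

lemma bij_betw_count_weak_compositions:
  assumes "finite A"
  shows "bij_betw count (multisets_of_size A N) (weak_compositions A N)"
proof (rule bij_betw_byWitness[where f' = Abs_multiset])
  show "\<forall>M\<in>multisets_of_size A N. Abs_multiset (count M) = M"
    by simp
  show "\<forall>g\<in>weak_compositions A N. count (Abs_multiset g) = g"
    using finite_support_weak_compositions[OF assms] by simp
  show "count ` multisets_of_size A N \<subseteq> weak_compositions A N"
    using assms by (auto simp: multisets_of_size_def weak_compositions_def size_eq_sum_count not_in_iff)
  show "Abs_multiset ` weak_compositions A N \<subseteq> multisets_of_size A N"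
  proof
    fix M assume "M \<in> Abs_multiset ` weak_compositions A N"
    then obtain g where g: "g \<in> weak_compositions A N" and M: "M = Abs_multiset g" by blast
    then have "count M = g"
      using finite_support_weak_compositions[OF assms] by (simp add: M)
    moreover have "set_mset M \<subseteq> A"
      using g \<open>count M = g\<close> by (auto simp: weak_compositions_def not_in_iff[symmetric])
    ultimately show "M \<in> multisets_of_size A N"
      using g assms by (simp add: multisets_of_size_def weak_compositions_def size_eq_sum_count)
  qed
qed

lemma card_weak_compositions:
  assumes "finite A"
  shows "card (weak_compositions A N) = (card A + N - 1) choose N"
  using bij_betw_same_card[OF bij_betw_count_weak_compositions[OF assms]]
    card_multisets_of_size[OF assms] by simp

definition binomR_set :: "nat \<Rightarrow> nat \<Rightarrow> nat set \<Rightarrow> nat set set" where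
  "binomR_set n k R = {S. S \<subseteq> {1..n} \<and> card S = k \<and> (\<forall>i\<in>R. spt n k S (Suc i) = spt n k S i + 1)}"

lemma binomR_eq_card_binomR_set: "binomR n k R = card (binomR_set n k R)"
  by (simp add: binomR_def binomR_set_def)

definition gaps :: "nat \<Rightarrow> nat \<Rightarrow> nat set \<Rightarrow> nat \<Rightarrow> nat" where
  "gaps n k S i = (if i \<le> k then spt n k S (Suc i) - spt n k S i - 1 else 0)"

definition gap_positions :: "(nat \<Rightarrow> nat) \<Rightarrow> nat \<Rightarrow> nat" where
  "gap_positions g i = sum g {..<i} + i"

lemma gap_positions_0 [simp]: "gap_positions g 0 = 0"
  by (simp add: gap_positions_def)

lemma gap_positions_Suc [simp]: "gap_positions g (Suc i) = gap_positions g i + g i + 1"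
  by (simp add: gap_positions_def)

lemma strict_mono_gap_positions: "strict_mono (gap_positions g)"
  by (simp add: strict_mono_Suc_iff)

lemma spt_less_spt_Suc:
  assumes S: "S \<subseteq> {1..n}" "card S = k" and i: "i \<le> k"
  shows "spt n k S i < spt n k S (Suc i)"
proof -
  let ?xs = "sorted_list_of_set S"
  have len: "length ?xs = k" using S by simp
  have mem: "?xs ! j \<in> {1..n}" if "j < k" for j
  proof -
    have "?xs ! j \<in> set ?xs"
      using that len by simp
    then show ?thesis
      using S(1) finite_subset[OF S(1)] by auto
  qed
  consider "i = 0" | "i = k" "0 < i" | "0 < i" "i < k"
    using i by linarith
  then show ?thesis
  proof cases
    case 1
    then show ?thesis using mem[of 0] by (cases k) (auto simp: spt_def)
  next
    case 2
    then show ?thesis using mem[of "k - 1"] by (auto simp: spt_def)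
  next
    case 3
    then have "?xs ! (i - 1) < ?xs ! i"
      using sorted_wrt_nth_less[OF strict_sorted_list_of_set[of S]] len by simp
    then show ?thesis using 3 by (simp add: spt_def)
  qed
qed

lemma gap_positions_gaps:
  assumes S: "S \<subseteq> {1..n}" "card S = k" and i: "i \<le> Suc k"
  shows "gap_positions (gaps n k S) i = spt n k S i"
  using i
proof (induction i)
  case 0
  then show ?case by (simp add: spt_def)
next
  case (Suc i)
  then show ?case using spt_less_spt_Suc[OF S, of i] by (simp add: gaps_def)
qed

lemma sum_gaps:
  assumes "S \<subseteq> {1..n}" "card S = k"
  shows "sum (gaps n k S) {..k} = n - k"
  using gap_positions_gaps[OF assms, of "Suc k"]
  by (simp add: gap_positions_def spt_def lessThan_Suc_atMost)

lemma image_gap_positions_gaps: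
  assumes S: "S \<subseteq> {1..n}" "card S = k"
  shows "gap_positions (gaps n k S) ` {1..k} = S"
proof -
  let ?xs = "sorted_list_of_set S"
  have len: "length ?xs = k"
    using S by simp
  have "gap_positions (gaps n k S) ` {1..k} = spt n k S ` {1..k}"
    using gap_positions_gaps[OF S] by (intro image_cong) auto
  also have "\<dots> = (\<lambda>j. ?xs ! j) ` {..<k}"
    unfolding image_Suc_lessThan[symmetric] image_image by (intro image_cong) (auto simp: spt_def)
  also have "\<dots> = set ?xs"
    using len by (simp add: atLeast0LessThan[symmetric] nth_image)
  also have "\<dots> = S"
    using finite_subset[OF S(1)] by simp
  finally show ?thesis .
qed

lemma sorted_list_of_set_image_gap_positions:
  "sorted_list_of_set (gap_positions g ` {1..k}) = map (gap_positions g) [1..<Suc k]"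
proof (rule strict_sorted_equal)
  show "sorted_wrt (<) (map (gap_positions g) [1..<Suc k])"
    using strict_mono_gap_positions[of g]
    by (auto simp del: upt_Suc gap_positions_Suc simp: sorted_wrt_map sorted_wrt_iff_nth_less strict_mono_def)
qed auto

lemma spt_image_gap_positions:
  assumes "i \<le> k"
  shows "spt n k (gap_positions g ` {1..k}) i = gap_positions g i"
proof (cases "i = 0")
  case False
  then have "sorted_list_of_set (gap_positions g ` {1..k}) ! (i - 1) = gap_positions g i"
    using assms unfolding sorted_list_of_set_image_gap_positions by (simp del: upt_Suc gap_positions_Suc)
  then show ?thesis
    using assms False by (simp add: spt_def)
qed (simp add: spt_def)

lemma gaps_in_weak_compositions:
  assumes "S \<in> binomR_set n k R"
  shows "gaps n k S \<in> weak_compositions ({0..k} - R) (n - k)"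
proof -
  from assms have S: "S \<subseteq> {1..n}" "card S = k"
    and adjacent: "\<forall>i\<in>R. spt n k S (Suc i) = spt n k S i + 1"
    by (auto simp: binomR_set_def)
  have vanish: "\<forall>i. i \<notin> {0..k} - R \<longrightarrow> gaps n k S i = 0"
    using adjacent by (auto simp: gaps_def)
  then have "sum (gaps n k S) ({0..k} - R) = sum (gaps n k S) {..k}"
    by (intro sum.mono_neutral_left) auto
  then show ?thesis
    using vanish sum_gaps[OF S] by (simp add: weak_compositions_def)
qed

lemma gap_positions_Suc_weak_compositions:
  assumes "R \<subseteq> {0..k}" "k \<le> n" "g \<in> weak_compositions ({0..k} - R) (n - k)"
  shows "gap_positions g (Suc k) = n + 1"
proof -
  have "sum g {..k} = sum g ({0..k} - R)"
    using assms by (intro sum.mono_neutral_right) (auto simp: weak_compositions_def)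
  then show ?thesis
    using assms by (simp add: gap_positions_def lessThan_Suc_atMost weak_compositions_def)
qed

lemma spt_image_gap_positions_weak_compositions:
  assumes "R \<subseteq> {0..k}" "k \<le> n" "g \<in> weak_compositions ({0..k} - R) (n - k)" "i \<le> Suc k"
  shows "spt n k (gap_positions g ` {1..k}) i = gap_positions g i"
proof (cases "i = Suc k")
  case True
  then show ?thesis
    using gap_positions_Suc_weak_compositions[OF assms(1-3)] by (simp add: spt_def)
next
  case False
  with assms(4) have "i \<le> k" by simp
  then show ?thesis by (rule spt_image_gap_positions)
qed

lemma image_gap_positions_in_binomR_set:
  assumes R: "R \<subseteq> {0..k}" and kn: "k \<le> n" and g: "g \<in> weak_compositions ({0..k} - R) (n - k)"
  shows "gap_positions g ` {1..k} \<in> binomR_set n k R"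
proof -
  let ?S = "gap_positions g ` {1..k}"
  note spt = spt_image_gap_positions_weak_compositions[OF R kn g]
  have "?S \<subseteq> {1..n}"
  proof
    fix x assume "x \<in> ?S"
    then obtain i where i: "i \<in> {1..k}" "x = gap_positions g i" by auto
    then have "gap_positions g 0 < x" "x < gap_positions g (Suc k)"
      using strict_monoD[OF strict_mono_gap_positions, of 0 i g]
        strict_monoD[OF strict_mono_gap_positions, of i "Suc k" g]
      by (simp_all del: gap_positions_0 gap_positions_Suc)
    then show "x \<in> {1..n}"
      using gap_positions_Suc_weak_compositions[OF R kn g] by simp
  qed
  moreover have "card ?S = k"
    using strict_mono_imp_inj_on[OF strict_mono_gap_positions] by (simp add: card_image)
  moreover have "spt n k ?S (Suc i) = spt n k ?S i + 1" if "i \<in> R" for i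
  proof -
    have "g i = 0" using g that by (auto simp: weak_compositions_def)
    then show ?thesis using spt[of i] spt[of "Suc i"] that R by auto
  qed
  ultimately show ?thesis by (simp add: binomR_set_def)
qed

lemma gaps_image_gap_positions:
  assumes R: "R \<subseteq> {0..k}" and kn: "k \<le> n" and g: "g \<in> weak_compositions ({0..k} - R) (n - k)"
  shows "gaps n k (gap_positions g ` {1..k}) = g"
proof
  fix i
  note spt = spt_image_gap_positions_weak_compositions[OF R kn g]
  show "gaps n k (gap_positions g ` {1..k}) i = g i"
  proof (cases "i \<le> k")
    case True
    then show ?thesis using spt[of i] spt[of "Suc i"] by (simp add: gaps_def)
  next
    case False
    then show ?thesis using g by (simp add: gaps_def weak_compositions_def)
  qed
qed

lemma bij_betw_gaps_weak_compositions:
  assumes "R \<subseteq> {0..k}" "k \<le> n"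
  shows "bij_betw (gaps n k) (binomR_set n k R) (weak_compositions ({0..k} - R) (n - k))"
proof (rule bij_betw_byWitness[where f' = "\<lambda>g. gap_positions g ` {1..k}"])
  show "\<forall>S\<in>binomR_set n k R. gap_positions (gaps n k S) ` {1..k} = S"
    unfolding binomR_set_def using image_gap_positions_gaps by blast
  show "\<forall>g\<in>weak_compositions ({0..k} - R) (n - k). gaps n k (gap_positions g ` {1..k}) = g"
    using gaps_image_gap_positions[OF assms] by blast
  show "gaps n k ` binomR_set n k R \<subseteq> weak_compositions ({0..k} - R) (n - k)"
    using gaps_in_weak_compositions by blast
  show "(\<lambda>g. gap_positions g ` {1..k}) ` weak_compositions ({0..k} - R) (n - k) \<subseteq> binomR_set n k R"
    using image_gap_positions_in_binomR_set[OF assms] by blast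
qed

lemma binomR_eq_choose:
  assumes "R \<subseteq> {0..k}"
  shows "binomR n k R = (if k \<le> n then (card ({0..k} - R) + (n - k) - 1) choose (n - k) else 0)"
proof (cases "k \<le> n")
  case True
  then show ?thesis
    using bij_betw_same_card[OF bij_betw_gaps_weak_compositions[OF assms True]]
    by (simp add: binomR_eq_card_binomR_set card_weak_compositions)
next
  case False
  have "binomR_set n k R = {}"
    using False card_mono[of "{1..n}"] by (fastforce simp: binomR_set_def)
  then show ?thesis
    using False by (simp add: binomR_eq_card_binomR_set)
qed

lemma of_nat_multichoose_eq_gbinomial:
  "(of_nat ((m + j - 1) choose j) :: 'a :: field_char_0) = (of_nat m + of_nat j - 1) gchoose j"
proof (cases "m + j")
  case 0
  then show ?thesis by simp
next
  case (Suc p)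
  then have "(of_nat m + of_nat j - 1 :: 'a) = of_nat (m + j - 1)"
    by (simp flip: of_nat_add)
  then show ?thesis
    by (simp add: binomial_gbinomial)
qed

lemma alternating_sum_multichoose_choose:
  assumes mm: "m + m' = Suc k" and kn: "k \<le> n"
  shows "real ((m + (n - k) - 1) choose (n - k)) =
    (\<Sum>l\<in>{0..n}. (-1::real) powi (int l - int k) *
       real (if k \<le> l then (m' + (l - k) - 1) choose (l - k) else 0) * real (n choose l))"
    (is "_ = sum ?t _")
proof -
  let ?N = "n - k"
  have "sum ?t {0..n} = sum ?t {k..n}"
    using kn by (intro sum.mono_neutral_right) auto
  also have "\<dots> = (\<Sum>j\<in>{0..?N}. ?t (j + k))"
    using sum.shift_bounds_cl_nat_ivl[of ?t 0 k ?N] kn by simp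
  also have "\<dots> = (\<Sum>j\<in>{0..?N}. (- real m' gchoose j) * (real n gchoose (?N - j)))"
  proof (rule sum.cong)
    fix j assume j: "j \<in> {0..?N}"
    have "j + k \<le> n"
      using j kn by simp
    then have "n choose (j + k) = n choose (?N - j)"
      by (subst binomial_symmetric) (simp_all add: diff_diff_left add.commute)
    then have "real (n choose (j + k)) = real n gchoose (?N - j)"
      by (simp add: binomial_gbinomial)
    moreover have "(- real m' gchoose j) = (-1) ^ j * ((real m' + real j - 1) gchoose j)"
      by (subst gbinomial_negated_upper) (simp add: add.commute)
    ultimately show "?t (j + k) = (- real m' gchoose j) * (real n gchoose (?N - j))"
      using of_nat_multichoose_eq_gbinomial[of m' j, where 'a = real] by simp
  qed simp
  also have "\<dots> = (- real m' + real n) gchoose ?N"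
    by (rule gbinomial_Vandermonde)
  also have "\<dots> = real ((m + ?N - 1) choose ?N)"
  proof -
    have "- real m' + real n = real m + real ?N - 1"
      using mm kn by simp
    then show ?thesis
      using of_nat_multichoose_eq_gbinomial[of m ?N, where 'a = real] by simp
  qed
  finally show ?thesis
    by (rule sym)
qed

theorem mainTheorem9:
  fixes n k :: nat and R :: "nat set"
  assumes "R \<subseteq> {0..k}"
  shows "real (binomR n k R) =
    (\<Sum>l\<in>{0..n}. (-1::real) powi (int l - int k) * real (binomR l k ({0..k} - R)) * real (n choose l))"
proof -
  have "{0..k} - ({0..k} - R) = R"
    using assms by auto
  then have complement: "binomR l k ({0..k} - R) =
      (if k \<le> l then (card R + (l - k) - 1) choose (l - k) else 0)" for l
    using binomR_eq_choose[of "{0..k} - R" k l] by simp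
  have card: "card ({0..k} - R) + card R = Suc k"
    using assms card_mono[OF _ assms] by (simp add: card_Diff_subset finite_subset)
  show ?thesis
  proof (cases "k \<le> n")
    case True
    then show ?thesis
      using alternating_sum_multichoose_choose[OF card True]
      by (simp add: binomR_eq_choose[OF assms] complement)
  next
    case False
    then have "binomR l k ({0..k} - R) = 0" if "l \<in> {0..n}" for l
      using that by (simp add: complement)
    then show ?thesis
      using False by (simp add: binomR_eq_choose[OF assms])
  qed
qed

end
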